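(* There is a constant $c$ such that for every $n\in\mathbb{N}_{\ge1}$ there exists a language $L_n$ recognized by a deterministic weak Muller automaton $\mathfrak{A}_n$ with explicitly represented acceptance family, of size at most $c\cdot n$, such that Player $O$ wins $\Gamma_f(L_n)$ for some constant delay function $f$, but Player $I$ wins $\Gamma_g(L_n)$ for every delay function $g$ with $g(0)\le 2^n$.
   Context: An $\omega$-automaton $\mathfrak{A}=(Q,\Sigma,q_I,\Delta,\mathrm{Acc})$ has finite state set $Q$, alphabet $\Sigma$, initial state $q_I$, transitions $\Delta\subseteq Q\times\Sigma\times Q$, accepting runs $\mathrm{Acc}\subseteq\Delta^\omega$; $L(\mathfrak{A})$ is the set of words processed by an initial accepting run. Deterministic means $\Delta$ is a total function $Q\times\Sigma\to Q$. A weak Muller automaton has $\mathcal{F}\subseteq 2^Q$ and accepts runs whose set of visited states lies in $\mathcal{F}$. With explicit representation ($\mathcal{F}$ listed element by element), its size is $|Q|+|\mathcal{F}|$. A delay function is $f:\mathbb{N}\to\mathbb{N}_{\ge1}$; it is constant if $f(i)=1$ for all $i>0$. In the delay game $\Gamma_f(L)$, $L\subseteq(\Sigma_I\times\Sigma_O)^\omega$, in round $i=0,1,\dots$ Player $I$ picks $u_i\in\Sigma_I^{f(i)}$ and then Player $O$ picks $v_i\in\Sigma_O$; $O$ wins the play iff $\binom{u_0u_1\cdots}{v_0v_1\cdots}\in L$. Strategies: $\tau_I:\Sigma_O^*\to\Sigma_I^*$ with $|\tau_I(w)|=f(|w|)$, $\tau_O:\Sigma_I^+\to\Sigma_O$;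 a player wins the game if she/he has a strategy winning all consistent plays. *)

theory Defs
  imports Main
begin

definition det_weak_muller ::
  "nat set \<Rightarrow> nat set \<Rightarrow> nat set \<Rightarrow> nat \<Rightarrow> (nat \<Rightarrow> nat \<times> nat \<Rightarrow> nat) \<Rightarrow> nat set set \<Rightarrow> bool" where
  "det_weak_muller \<Sigma>I \<Sigma>O Q qI delta F \<longleftrightarrow>
     finite Q \<and> qI \<in> Q \<and>
     (\<forall>q\<in>Q. \<forall>a\<in>\<Sigma>I. \<forall>b\<in>\<Sigma>O. delta q (a, b) \<in> Q) \<and>
     F \<subseteq> Pow Q"

definition wm_size :: "nat set \<Rightarrow> nat set set \<Rightarrow> nat" where
  "wm_size Q F = card Q + card F"

fun wm_run :: "nat \<Rightarrow> (nat \<Rightarrow> nat \<times> nat \<Rightarrow> nat) \<Rightarrow> (nat \<Rightarrow> nat \<times> nat) \<Rightarrow> nat \<Rightarrow> nat" where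
  "wm_run qI delta w 0 = qI"
| "wm_run qI delta w (Suc i) = delta (wm_run qI delta w i) (w i)"

definition wm_lang ::
  "nat set \<Rightarrow> nat set \<Rightarrow> nat \<Rightarrow> (nat \<Rightarrow> nat \<times> nat \<Rightarrow> nat) \<Rightarrow> nat set set \<Rightarrow> (nat \<Rightarrow> nat \<times> nat) set" where
  "wm_lang \<Sigma>I \<Sigma>O qI delta F =
     {w. (\<forall>i. w i \<in> \<Sigma>I \<times> \<Sigma>O) \<and> range (wm_run qI delta w) \<in> F}"

definition delay_fun :: "(nat \<Rightarrow> nat) \<Rightarrow> bool" where
  "delay_fun f \<longleftrightarrow> (\<forall>i. f i \<ge> 1)"

definition constant_delay :: "(nat \<Rightarrow> nat) \<Rightarrow> bool" where
  "constant_delay f \<longleftrightarrow> delay_fun f \<and> (\<forall>i>0. f i = 1)"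

text \<open>The input word u_0 u_1 ... of a play, where each block u i is nonempty.\<close>
definition input_word :: "(nat \<Rightarrow> nat list) \<Rightarrow> nat \<Rightarrow> nat" where
  "input_word u k = concat (map u [0..<Suc k]) ! k"

definition play_word :: "(nat \<Rightarrow> nat list) \<Rightarrow> (nat \<Rightarrow> nat) \<Rightarrow> nat \<Rightarrow> nat \<times> nat" where
  "play_word u v k = (input_word u k, v k)"

definition strategy_I :: "(nat \<Rightarrow> nat) \<Rightarrow> nat set \<Rightarrow> nat set \<Rightarrow> (nat list \<Rightarrow> nat list) \<Rightarrow> bool" where
  "strategy_I f \<Sigma>I \<Sigma>O tauI \<longleftrightarrow>
     (\<forall>w. set w \<subseteq> \<Sigma>O \<longrightarrow> length (tauI w) = f (length w) \<and> set (tauI w) \<subseteq> \<Sigma>I)"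

definition strategy_O :: "nat set \<Rightarrow> nat set \<Rightarrow> (nat list \<Rightarrow> nat) \<Rightarrow> bool" where
  "strategy_O \<Sigma>I \<Sigma>O tauO \<longleftrightarrow> (\<forall>x. x \<noteq> [] \<and> set x \<subseteq> \<Sigma>I \<longrightarrow> tauO x \<in> \<Sigma>O)"

definition is_play :: "(nat \<Rightarrow> nat) \<Rightarrow> nat set \<Rightarrow> nat set \<Rightarrow> (nat \<Rightarrow> nat list) \<Rightarrow> (nat \<Rightarrow> nat) \<Rightarrow> bool" where
  "is_play f \<Sigma>I \<Sigma>O u v \<longleftrightarrow>
     (\<forall>i. length (u i) = f i \<and> set (u i) \<subseteq> \<Sigma>I \<and> v i \<in> \<Sigma>O)"

definition consistent_I :: "(nat list \<Rightarrow> nat list) \<Rightarrow> (nat \<Rightarrow> nat list) \<Rightarrow> (nat \<Rightarrow> nat) \<Rightarrow> bool" where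
  "consistent_I tauI u v \<longleftrightarrow> (\<forall>i. u i = tauI (map v [0..<i]))"

definition consistent_O :: "(nat list \<Rightarrow> nat) \<Rightarrow> (nat \<Rightarrow> nat list) \<Rightarrow> (nat \<Rightarrow> nat) \<Rightarrow> bool" where
  "consistent_O tauO u v \<longleftrightarrow> (\<forall>i. v i = tauO (concat (map u [0..<Suc i])))"

definition O_wins :: "(nat \<Rightarrow> nat) \<Rightarrow> nat set \<Rightarrow> nat set \<Rightarrow> (nat \<Rightarrow> nat \<times> nat) set \<Rightarrow> bool" where
  "O_wins f \<Sigma>I \<Sigma>O L \<longleftrightarrow>
     (\<exists>tauO. strategy_O \<Sigma>I \<Sigma>O tauO \<and>
        (\<forall>u v. is_play f \<Sigma>I \<Sigma>O u v \<and> consistent_O tauO u v \<longrightarrow> play_word u v \<in> L))"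

definition I_wins :: "(nat \<Rightarrow> nat) \<Rightarrow> nat set \<Rightarrow> nat set \<Rightarrow> (nat \<Rightarrow> nat \<times> nat) set \<Rightarrow> bool" where
  "I_wins f \<Sigma>I \<Sigma>O L \<longleftrightarrow>
     (\<exists>tauI. strategy_I f \<Sigma>I \<Sigma>O tauI \<and>
        (\<forall>u v. is_play f \<Sigma>I \<Sigma>O u v \<and> consistent_I tauI u v \<longrightarrow> play_word u v \<notin> L))"

end

theory Submission
  imports Defs
begin

text \<open>Player I writes a binary counter 0, 1, ..., 2^n into consecutive positions and then a
bit, which Player O has to guess with its first move. With lookahead 2^n + 2, O sees that bit
in time and can afterwards point at the first wrong increment of the counter by naming a bit
position j at which the successor value is wrong; to check such a claim the automaton only
remembers j and the expected value of bit j, so it has O(n) states. With initial lookahead at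
most 2^n, the bit at position 2^n is chosen only after O's guess: I counts correctly and
contradicts the guess.\<close>

lemma eq_if_low_bits_eq:
  fixes x y :: nat
  assumes "x < 2 ^ k" "y < 2 ^ k" "\<forall>j<k. bit x j = bit y j"
  shows "x = y"
  by (metis assms bit_eq_iff bit_take_bit_iff take_bit_nat_eq_self_iff)

lemma range_eventually_const:
  fixes r :: "nat \<Rightarrow> 'a"
  assumes "\<And>i. k \<le> i \<Longrightarrow> r i = x"
  shows "range r = insert x (r ` {..<k})"
proof -
  have "r i \<in> insert x (r ` {..<k})" for i
  proof (cases "k \<le> i")
    case False
    then show ?thesis by (intro insertI2 imageI) simp
  qed (simp add: assms)
  moreover have "r k = x" by (simp add: assms)
  ultimately show ?thesis by blast
qed

lemma counting_prefix:
  fixes c :: "nat \<Rightarrow> nat"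
  assumes "c 0 = 0"
  obtains m where "m \<le> N" "\<And>i. i \<le> m \<Longrightarrow> c i = i" "m = N \<or> c (Suc m) \<noteq> Suc m"
proof -
  obtain m where stop: "m = N \<or> c (Suc m) \<noteq> Suc m"
    and before: "\<And>k. k < m \<Longrightarrow> \<not> (k = N \<or> c (Suc k) \<noteq> Suc k)"
    using exists_least_iff[of "\<lambda>m. m = N \<or> c (Suc m) \<noteq> Suc m"] by blast
  have "m \<le> N" using before[of N] by (meson not_le)
  moreover have "c i = i" if "i \<le> m" for i
    using that assms before by (induction i) auto
  ultimately show ?thesis using stop by (rule that)
qed

subsection \<open>Plays\<close>

lemma concat_map_upt_split:
  "k \<le> l \<Longrightarrow> concat (map u [0..<l]) = concat (map u [0..<k]) @ concat (map u [k..<l])"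
  by (metis concat_append le_Suc_ex map_append upt_add_eq_append zero_le)

lemma length_concat_map_upt_ge:
  "(\<And>i. u i \<noteq> []) \<Longrightarrow> l \<le> length (concat (map u [0..<l]))"
proof (induction l)
  case (Suc l)
  have "0 < length (u l)" using Suc.prems by simp
  then show ?case using Suc by (simp del: length_greater_0_conv)
qed simp

lemma input_word_nth_concat:
  assumes nonempty: "\<And>i. u i \<noteq> []" and p: "p < length (concat (map u [0..<k]))"
  shows "input_word u p = concat (map u [0..<k]) ! p"
proof (cases "k \<le> Suc p")
  case True
  then show ?thesis
    using p by (simp add: input_word_def concat_map_upt_split[of k "Suc p"] nth_append del: upt_Suc)
next
  case False
  have "p < length (concat (map u [0..<Suc p]))"
    using length_concat_map_upt_ge[of u "Suc p", OF nonempty] by (simp del: upt_Suc)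
  then show ?thesis
    using False by (simp add: input_word_def concat_map_upt_split[of "Suc p" k] nth_append del: upt_Suc)
qed

lemma play_word_in_alphabets:
  assumes "is_play d \<Sigma>I \<Sigma>O u v" "delay_fun d"
  shows "play_word u v i \<in> \<Sigma>I \<times> \<Sigma>O"
proof -
  have nonempty: "u j \<noteq> []" for j
    using assms by (metis delay_fun_def is_play_def list.size(3) not_one_le_zero)
  have "input_word u i \<in> set (concat (map u [0..<Suc i]))"
    using length_concat_map_upt_ge[of u "Suc i", OF nonempty]
    unfolding input_word_def by (intro nth_mem) simp
  then show ?thesis
    using assms(1) by (auto simp: play_word_def is_play_def)
qed

lemma input_word_of_blocks:
  assumes "delay_fun d"
    and blocks: "\<And>i. u i = map h [(\<Sum>j<i. d j)..<(\<Sum>j<i. d j) + d i]"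
  shows "input_word u p = h p"
proof -
  have prefix: "concat (map u [0..<k]) = map h [0..<(\<Sum>j<k. d j)]" for k
    by (induction k) (simp_all add: blocks upt_add_eq_append[OF le0])
  have "Suc p \<le> (\<Sum>j<Suc p. d j)"
    using sum_mono[of "{..<Suc p}" "\<lambda>_. 1" d] assms(1) by (simp add: delay_fun_def)
  then show ?thesis
    by (simp add: input_word_def prefix del: upt_Suc)
qed

subsection \<open>The automaton\<close>

text \<open>An input letter 2 p + h carries a counter value p \<le> 2^n and a bit h; an output letter
2 k + g carries a claim k and a guess g, where k = Suc j claims that bit j of the next counter
value is wrong. State 0 is initial, 1 and 2 are the accepting and rejecting sinks, 3 + g counts
under guess g, and 5 + 2 j + e verifies that bit j of the next counter value differs from e.\<close>

definition counter_inputs :: "nat \<Rightarrow> nat set" where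
  "counter_inputs n = {..<2 * (2 ^ n + 1)}"

definition counter_outputs :: "nat \<Rightarrow> nat set" where
  "counter_outputs n = {..<2 * (n + 2)}"

definition counter_states :: "nat \<Rightarrow> nat set" where
  "counter_states n = {..<2 * n + 7}"

definition count_step :: "nat \<Rightarrow> nat \<Rightarrow> nat \<Rightarrow> nat" where
  "count_step g p k = (case k of 0 \<Rightarrow> 3 + g | Suc j \<Rightarrow> 5 + 2 * j + of_bool (bit (Suc p) j))"

definition counter_trans :: "nat \<Rightarrow> nat \<Rightarrow> nat \<times> nat \<Rightarrow> nat" where
  "counter_trans n q x =
    (let p = fst x div 2; h = fst x mod 2; k = snd x div 2 in
     if q = 0 then (if p = 0 then count_step (snd x mod 2) p k else 1)
     else if q = 3 \<or> q = 4 then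
       (if p = 2 ^ n then (if h = q - 3 then 1 else 2) else count_step (q - 3) p k)
     else if 5 \<le> q then (if of_bool (bit p ((q - 5) div 2)) = (q - 5) mod 2 then 2 else 1)
     else q)"

definition counter_acc :: "nat \<Rightarrow> nat set set" where
  "counter_acc n = (\<lambda>(G, C). {0, 1} \<union> G \<union> C) `
     ({{}, {3}, {4}} \<times> insert {} ((\<lambda>t. {5 + t}) ` {..<2 * n + 2}))"

abbreviation counter_lang :: "nat \<Rightarrow> (nat \<Rightarrow> nat \<times> nat) set" where
  "counter_lang n \<equiv> wm_lang (counter_inputs n) (counter_outputs n) 0 (counter_trans n) (counter_acc n)"

lemma counter_trans_sink: "q = 1 \<or> q = 2 \<Longrightarrow> counter_trans n q x = q"
  by (auto simp: counter_trans_def)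

lemma counter_trans_bad_start: "a div 2 \<noteq> 0 \<Longrightarrow> counter_trans n 0 (a, b) = 1"
  by (simp add: counter_trans_def)

lemma counter_trans_counting:
  assumes "g < 2" "a div 2 = i" "i \<noteq> 2 ^ n" "i = 0 \<Longrightarrow> b mod 2 = g"
  shows "counter_trans n (if i = 0 then 0 else 3 + g) (a, b) = count_step g i (b div 2)"
  using assms by (auto simp: counter_trans_def Let_def)

lemma counter_trans_final:
  assumes "g < 2" "a div 2 = 2 ^ n"
  shows "counter_trans n (3 + g) (a, b) = (if a mod 2 = g then 1 else 2)"
  using assms by (auto simp: counter_trans_def Let_def)

lemma counter_trans_verify:
  "counter_trans n (count_step g p (Suc j)) x = (if bit (fst x div 2) j = bit (Suc p) j then 2 else 1)"
  by (simp add: counter_trans_def count_step_def)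

lemma count_step_in_states:
  "g < 2 \<Longrightarrow> k \<le> Suc n \<Longrightarrow> count_step g p k \<in> counter_states n"
  by (cases k) (auto simp: count_step_def counter_states_def)

lemma det_weak_muller_counter:
  "det_weak_muller (counter_inputs n) (counter_outputs n) (counter_states n) 0 (counter_trans n) (counter_acc n)"
proof -
  have "counter_trans n q (a, b) \<in> counter_states n"
    if "q \<in> counter_states n" "b \<in> counter_outputs n" for q a b
  proof -
    have "b div 2 \<le> Suc n" using that(2) by (simp add: counter_outputs_def)
    then show ?thesis
      using that(1) count_step_in_states[of "b mod 2"] count_step_in_states[of "q - 3"]
      by (auto simp: counter_trans_def Let_def counter_states_def)
  qed
  then show ?thesis
    by (auto simp: det_weak_muller_def counter_states_def counter_acc_def)
qed

lemma card_counter_acc: "card (counter_acc n) \<le> 6 * n + 9"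
proof -
  let ?G = "{{}, {3}, {4}} :: nat set set"
  let ?C = "insert {} ((\<lambda>t. {5 + t}) ` {..<2 * n + 2}) :: nat set set"
  have "card ((\<lambda>t. {5 + t}) ` {..<2 * n + 2} :: nat set set) \<le> 2 * n + 2"
    using card_image_le[of "{..<2 * n + 2}" "\<lambda>t. {5 + t}"] by simp
  then have "card ?C \<le> 2 * n + 3"
    using card_insert_le_m1 by (simp add: card_insert_if)
  moreover have "card ?G = 3" by simp
  ultimately have "card (?G \<times> ?C) \<le> 3 * (2 * n + 3)"
    by (metis card_cartesian_product mult_le_mono2)
  moreover have "card (counter_acc n) \<le> card (?G \<times> ?C)"
    unfolding counter_acc_def by (rule card_image_le) simp
  ultimately show ?thesis by simp
qed

lemma counter_accI:
  assumes "G \<in> {{}, {3}, {4}}" "C = {} \<or> (\<exists>t<2 * n + 2. C = {5 + t})"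
  shows "{0, 1} \<union> G \<union> C \<in> counter_acc n"
  using assms unfolding counter_acc_def by (auto intro!: image_eqI[where x = "(G, C)"])

lemma rejecting_sink_notin_counter_acc: "S \<in> counter_acc n \<Longrightarrow> 2 \<notin> S"
  by (auto simp: counter_acc_def)

lemma counter_run_counting:
  assumes "g < 2" "v 0 mod 2 = g"
    and counting: "\<And>i. i < m \<Longrightarrow> a i div 2 = i \<and> i \<noteq> 2 ^ n \<and> v i div 2 = 0"
  shows "i \<le> m \<Longrightarrow> wm_run 0 (counter_trans n) (\<lambda>i. (a i, v i)) i = (if i = 0 then 0 else 3 + g)"
proof (induction i)
  case (Suc i)
  then show ?case
    using counter_trans_counting[OF assms(1), of "a i" i n "v i"] counting[of i] assms(2)
    by (simp add: count_step_def)
qed simp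

subsection \<open>Player O\<close>

definition claim :: "nat \<Rightarrow> nat \<Rightarrow> nat \<Rightarrow> nat" where
  "claim n p p' =
    (if p \<noteq> 2 ^ n \<and> (\<exists>j\<le>n. bit p' j \<noteq> bit (Suc p) j)
     then Suc (LEAST j. bit p' j \<noteq> bit (Suc p) j) else 0)"

lemma claim_le: "claim n p p' \<le> Suc n"
  unfolding claim_def by (auto intro: Least_le dual_order.trans)

lemma claim_correct_increment: "claim n p (Suc p) = 0"
  by (simp add: claim_def)

lemma claim_wrong_increment:
  assumes "p < 2 ^ n" "p' \<le> 2 ^ n" "p' \<noteq> Suc p"
  obtains j where "claim n p p' = Suc j" "bit p' j \<noteq> bit (Suc p) j"
proof -
  let ?differ = "\<lambda>j. bit p' j \<noteq> bit (Suc p) j"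
  have "p' < 2 ^ Suc n" "Suc p < 2 ^ Suc n"
    using assms(1,2) by simp_all
  then have "\<not> (\<forall>j<Suc n. bit p' j = bit (Suc p) j)"
    using eq_if_low_bits_eq assms(3) by blast
  then obtain j where "j \<le> n" "?differ j"
    using less_Suc_eq_le by blast
  then have "claim n p p' = Suc (LEAST j. ?differ j)"
    using assms(1) unfolding claim_def by auto
  moreover from \<open>?differ j\<close> have "?differ (LEAST j. ?differ j)"
    by (rule LeastI)
  ultimately show ?thesis by (rule that)
qed

lemma counting_run_accepted:
  fixes r :: "nat \<Rightarrow> nat"
  assumes step: "\<And>i. r (Suc i) = counter_trans n (r i) (w i)"
    and g: "g < 2" and count: "\<And>i. i \<le> m \<Longrightarrow> r i = (if i = 0 then 0 else 3 + g)"
    and ends: "r (Suc m) = 1 \<or> r (Suc (Suc m)) = 1 \<and> (\<exists>t<2 * n + 2. r (Suc m) = 5 + t)"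
  shows "range r \<in> counter_acc n"
proof -
  have accepted: "range r = insert 1 (r ` {..<k})" if "r k = 1" for k
  proof (rule range_eventually_const)
    show "r i = 1" if "k \<le> i" for i
      using that by (induction i rule: dec_induct) (simp_all add: \<open>r k = 1\<close> step counter_trans_sink)
  qed
  let ?G = "if m = 0 then {} else {3 + g}"
  have prefix: "r ` {..<Suc m} = {0} \<union> ?G"
  proof -
    have "{..<Suc m} = insert 0 {1..m}" by auto
    then show ?thesis using count by (auto simp: image_iff)
  qed
  have G: "?G \<in> {{}, {3}, {4}}"
    using g by auto
  from ends show ?thesis
  proof
    assume "r (Suc m) = 1"
    then have "range r = {0, 1} \<union> ?G \<union> {}"
      using accepted[of "Suc m"] prefix by auto
    then show ?thesis using counter_accI[OF G, of "{}" n] by simp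
  next
    assume verify: "r (Suc (Suc m)) = 1 \<and> (\<exists>t<2 * n + 2. r (Suc m) = 5 + t)"
    then have "range r = insert 1 (r ` {..<Suc m} \<union> {r (Suc m)})"
      using accepted[of "Suc (Suc m)"] by (simp add: lessThan_Suc)
    then have "range r = {0, 1} \<union> ?G \<union> {r (Suc m)}"
      using prefix by auto
    then show ?thesis using counter_accI[OF G, of "{r (Suc m)}" n] verify by simp
  qed
qed

lemma counter_run_accepted:
  fixes a v :: "nat \<Rightarrow> nat"
  assumes n: "1 \<le> n" and counters: "\<And>p. a p div 2 \<le> 2 ^ n"
    and outputs: "\<And>i. v i = 2 * claim n (a i div 2) (a (Suc i) div 2) + a (2 ^ n) mod 2"
  shows "range (wm_run 0 (counter_trans n) (\<lambda>i. (a i, v i))) \<in> counter_acc n"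
proof -
  define N where "N = (2::nat) ^ n"
  define c where "c p = a p div 2" for p
  define g where "g = a N mod 2"
  define r where "r = wm_run 0 (counter_trans n) (\<lambda>i. (a i, v i))"
  have N: "2 \<le> N" using power_increasing[OF n, of "2::nat"] by (simp add: N_def)
  have g: "g < 2" by (simp add: g_def)
  have v_div: "v i div 2 = claim n (c i) (c (Suc i))" and v_mod: "v i mod 2 = g" for i
    using outputs[of i] by (simp_all add: c_def g_def N_def)
  have r_Suc: "r (Suc i) = counter_trans n (r i) (a i, v i)" for i
    by (simp add: r_def)
  show ?thesis
  proof (cases "c 0 = 0")
    case False
    then have "r 1 = 1" using r_Suc[of 0] by (simp add: r_def c_def counter_trans_bad_start)
    moreover have "r 0 = 0" by (simp add: r_def)
    ultimately have "range r \<in> counter_acc n"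
      using counting_run_accepted[where r = r and w = "\<lambda>i. (a i, v i)", OF r_Suc g, of 0] by simp
    then show ?thesis by (simp add: r_def)
  next
    case True
    then obtain m where "m \<le> N" and c_eq: "\<And>i. i \<le> m \<Longrightarrow> c i = i"
      and stop: "m = N \<or> c (Suc m) \<noteq> Suc m"
      using counting_prefix[where c = c and N = N] by metis
    have count: "r i = (if i = 0 then 0 else 3 + g)" if "i \<le> m" for i
      using counter_run_counting[OF g v_mod, where m = m and a = a and n = n and i = i]
        that c_eq \<open>m \<le> N\<close>
      by (simp add: r_def v_div c_def N_def claim_correct_increment)
    have "r (Suc m) = 1 \<or> r (Suc (Suc m)) = 1 \<and> (\<exists>t<2 * n + 2. r (Suc m) = 5 + t)"
    proof (cases "m = N")
      case True
      then show ?thesis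
        using N count[of m] r_Suc[of m] counter_trans_final[OF g] c_eq[of m]
        by (simp add: c_def g_def N_def)
    next
      case False
      then have wrong: "m < 2 ^ n" "c (Suc m) \<noteq> Suc (c m)"
        using \<open>m \<le> N\<close> stop c_eq[of m] by (auto simp: N_def)
      obtain j where j: "claim n m (c (Suc m)) = Suc j" "bit (c (Suc m)) j \<noteq> bit (Suc m) j"
        using claim_wrong_increment[of m n "c (Suc m)"] wrong counters c_eq[of m] by (auto simp: c_def)
      have check: "r (Suc m) = count_step g m (Suc j)"
        using count[of m] r_Suc[of m] counter_trans_counting[OF g, of "a m" m n "v m"]
          wrong c_eq[of m] j
        by (simp add: v_div v_mod c_def)
      then have "r (Suc (Suc m)) = 1"
        using r_Suc[of "Suc m"] counter_trans_verify j by (simp add: c_def)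
      moreover have "\<exists>t<2 * n + 2. r (Suc m) = 5 + t"
        using check claim_le[of n m "c (Suc m)"] j by (auto simp: count_step_def)
      ultimately show ?thesis by blast
    qed
    with count have "range r \<in> counter_acc n"
      by (rule counting_run_accepted[where r = r and w = "\<lambda>i. (a i, v i)", OF r_Suc g])
    then show ?thesis by (simp add: r_def)
  qed
qed

definition O_delay :: "nat \<Rightarrow> nat \<Rightarrow> nat" where
  "O_delay n i = (if i = 0 then 2 ^ n + 2 else 1)"

definition O_strategy :: "nat \<Rightarrow> nat list \<Rightarrow> nat" where
  "O_strategy n x =
    (let i = length x - (2 ^ n + 2) in 2 * claim n (x ! i div 2) (x ! Suc i div 2) + x ! (2 ^ n) mod 2)"

lemma constant_delay_O_delay: "constant_delay (O_delay n)"
  by (simp add: constant_delay_def delay_fun_def O_delay_def)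

lemma strategy_O_counter: "strategy_O (counter_inputs n) (counter_outputs n) (O_strategy n)"
proof -
  have "2 * claim n p p' + b mod 2 < 2 * (n + 2)" for p p' b
    using claim_le[of n p p'] by (simp add: less_Suc_eq_le mod_less_eq_dividend)
  then show ?thesis
    by (simp add: strategy_O_def counter_outputs_def O_strategy_def Let_def)
qed

lemma O_wins_counter:
  assumes "1 \<le> n"
  shows "O_wins (O_delay n) (counter_inputs n) (counter_outputs n) (counter_lang n)"
  unfolding O_wins_def
proof (intro exI conjI allI impI)
  show "strategy_O (counter_inputs n) (counter_outputs n) (O_strategy n)"
    by (rule strategy_O_counter)
  fix u v
  assume play: "is_play (O_delay n) (counter_inputs n) (counter_outputs n) u v \<and> consistent_O (O_strategy n) u v"
  define X where "X i = concat (map u [0..<Suc i])" for i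
  have nonempty: "u i \<noteq> []" for i
    using play by (metis O_delay_def is_play_def list.size(3) one_neq_zero add_2_eq_Suc' nat.distinct(1))
  have len: "length (X i) = 2 ^ n + 2 + i" for i
    using play by (induction i) (simp_all add: X_def is_play_def O_delay_def)
  have nth: "X i ! p = input_word u p" if "p < 2 ^ n + 2 + i" for i p
    using input_word_nth_concat[of u p "Suc i", OF nonempty] that len[of i]
    unfolding X_def[symmetric] by simp
  have "v i = O_strategy n (X i)" for i
    using play by (simp add: consistent_O_def X_def)
  then have "v i = 2 * claim n (input_word u i div 2) (input_word u (Suc i) div 2) + input_word u (2 ^ n) mod 2" for i
    by (simp add: O_strategy_def Let_def len nth)
  moreover have alphabet: "play_word u v i \<in> counter_inputs n \<times> counter_outputs n" for i
    using play_word_in_alphabets constant_delay_O_delay play by (metis constant_delay_def)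
  then have "input_word u p < (2 ^ n + 1) * 2" for p
    by (auto simp: play_word_def counter_inputs_def mult.commute)
  then have "input_word u p div 2 \<le> 2 ^ n" for p
    by (metis less_mult_imp_div_less less_Suc_eq_le Suc_eq_plus1)
  ultimately have "range (wm_run 0 (counter_trans n) (play_word u v)) \<in> counter_acc n"
    using counter_run_accepted[OF assms] by (simp add: play_word_def[abs_def])
  then show "play_word u v \<in> counter_lang n"
    using alphabet by (simp add: wm_lang_def)
qed

subsection \<open>Player I\<close>

definition I_letter :: "nat \<Rightarrow> nat \<Rightarrow> nat \<Rightarrow> nat" where
  "I_letter n g p = (if p < 2 ^ n then 2 * p else if p = 2 ^ n then 2 * 2 ^ n + (1 - g) else 0)"

text \<open>In round 0 the guess hd [] is unspecified, but all positions of that block lie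
below d 0 \<le> 2^n, where the letter does not depend on the guess.\<close>
definition I_strategy :: "nat \<Rightarrow> (nat \<Rightarrow> nat) \<Rightarrow> nat list \<Rightarrow> nat list" where
  "I_strategy n d w =
    map (I_letter n (hd w mod 2)) [(\<Sum>i<length w. d i)..<(\<Sum>i<length w. d i) + d (length w)]"

lemma strategy_I_counter: "strategy_I d (counter_inputs n) (counter_outputs n) (I_strategy n d)"
  by (auto simp: strategy_I_def I_strategy_def I_letter_def counter_inputs_def)

lemma counter_run_rejected:
  fixes a v :: "nat \<Rightarrow> nat"
  assumes inputs: "\<And>p. a p = I_letter n (v 0 mod 2) p"
  shows "2 \<in> range (wm_run 0 (counter_trans n) (\<lambda>i. (a i, v i)))"
proof -
  define N where "N = (2::nat) ^ n"
  define g where "g = v 0 mod 2"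
  define r where "r = wm_run 0 (counter_trans n) (\<lambda>i. (a i, v i))"
  have g: "g < 2" by (simp add: g_def)
  have counter: "a p div 2 = p" if "p \<le> N" for p
    using that by (auto simp: inputs I_letter_def N_def)
  have r_Suc: "r (Suc i) = counter_trans n (r i) (a i, v i)" for i
    by (simp add: r_def)
  obtain m where stop: "m = N \<or> v m div 2 \<noteq> 0"
    and before: "\<And>i. i < m \<Longrightarrow> \<not> (i = N \<or> v i div 2 \<noteq> 0)"
    using exists_least_iff[of "\<lambda>m. m = N \<or> v m div 2 \<noteq> 0"] by blast
  have "m \<le> N" using before[of N] by (meson not_le)
  have count: "r m = (if m = 0 then 0 else 3 + g)"
    using counter_run_counting[OF g, where v = v and m = m and a = a and n = n and i = m]
      before counter \<open>m \<le> N\<close>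
    by (simp add: r_def g_def N_def)
  show ?thesis
  proof (cases "m = N")
    case True
    have "a N mod 2 \<noteq> g"
      using g by (auto simp: inputs I_letter_def N_def g_def less_2_cases_iff)
    then have "r (Suc N) = 2"
      using True count r_Suc[of N] counter_trans_final[OF g] counter[of N]
      by (simp add: N_def)
    then show ?thesis unfolding r_def by (metis rangeI)
  next
    case False
    then obtain j where j: "v m div 2 = Suc j" and "m < N"
      using stop \<open>m \<le> N\<close> not0_implies_Suc by fastforce
    then have "r (Suc m) = count_step g m (Suc j)"
      using count r_Suc[of m] counter_trans_counting[OF g, of "a m" m n "v m"] counter[of m]
      by (simp add: N_def g_def)
    then have "r (Suc (Suc m)) = 2"
      using r_Suc[of "Suc m"] counter_trans_verify counter[of "Suc m"] \<open>m < N\<close> by simp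
    then show ?thesis unfolding r_def by (metis rangeI)
  qed
qed

lemma I_wins_counter:
  assumes "delay_fun d" "d 0 \<le> 2 ^ n"
  shows "I_wins d (counter_inputs n) (counter_outputs n) (counter_lang n)"
  unfolding I_wins_def
proof (intro exI conjI allI impI)
  show "strategy_I d (counter_inputs n) (counter_outputs n) (I_strategy n d)"
    by (rule strategy_I_counter)
  fix u v
  assume "is_play d (counter_inputs n) (counter_outputs n) u v \<and> consistent_I (I_strategy n d) u v"
  then have consistent: "u i = I_strategy n d (map v [0..<i])" for i
    by (simp add: consistent_I_def)
  have "u i = map (I_letter n (v 0 mod 2)) [(\<Sum>j<i. d j)..<(\<Sum>j<i. d j) + d i]" for i
    unfolding consistent I_strategy_def length_map length_upt diff_zero
  proof (rule map_cong[OF refl])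
    fix p
    assume p: "p \<in> set [(\<Sum>j<i. d j)..<(\<Sum>j<i. d j) + d i]"
    show "I_letter n (hd (map v [0..<i]) mod 2) p = I_letter n (v 0 mod 2) p"
    proof (cases i)
      case 0
      then have "p < 2 ^ n" using p assms(2) by simp
      then show ?thesis by (simp add: I_letter_def)
    next
      case (Suc k)
      then show ?thesis by (simp add: upt_conv_Cons del: upt_Suc)
    qed
  qed
  then have "input_word u p = I_letter n (v 0 mod 2) p" for p
    by (rule input_word_of_blocks[OF assms(1)])
  then have "2 \<in> range (wm_run 0 (counter_trans n) (play_word u v))"
    using counter_run_rejected by (simp add: play_word_def[abs_def])
  then show "play_word u v \<notin> counter_lang n"
    using rejecting_sink_notin_counter_acc by (auto simp: wm_lang_def)
qed

lemma wm_size_counter: "1 \<le> n \<Longrightarrow> wm_size (counter_states n) (counter_acc n) \<le> 24 * n"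
  using card_counter_acc[of n] by (simp add: wm_size_def counter_states_def)

lemma counter_game:
  assumes "1 \<le> n"
  shows "finite (counter_inputs n) \<and> counter_inputs n \<noteq> {} \<and>
    finite (counter_outputs n) \<and> counter_outputs n \<noteq> {} \<and>
    det_weak_muller (counter_inputs n) (counter_outputs n) (counter_states n) 0 (counter_trans n) (counter_acc n) \<and>
    wm_size (counter_states n) (counter_acc n) \<le> 24 * n \<and>
    (\<exists>f. constant_delay f \<and> O_wins f (counter_inputs n) (counter_outputs n) (counter_lang n)) \<and>
    (\<forall>g. delay_fun g \<and> g 0 \<le> 2 ^ n \<longrightarrow> I_wins g (counter_inputs n) (counter_outputs n) (counter_lang n))"
  using det_weak_muller_counter wm_size_counter[OF assms] constant_delay_O_delay
    O_wins_counter[OF assms] I_wins_counter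
  by (auto simp: counter_inputs_def counter_outputs_def)

theorem corollary1:
  shows "\<exists>c::nat. \<forall>n::nat. n \<ge> 1 \<longrightarrow>
    (\<exists>(\<Sigma>I::nat set) (\<Sigma>O::nat set) (Q::nat set) (qI::nat) delta (F::nat set set).
        finite \<Sigma>I \<and> \<Sigma>I \<noteq> {} \<and> finite \<Sigma>O \<and> \<Sigma>O \<noteq> {} \<and>
        det_weak_muller \<Sigma>I \<Sigma>O Q qI delta F \<and>
        wm_size Q F \<le> c * n \<and>
        (\<exists>f. constant_delay f \<and> O_wins f \<Sigma>I \<Sigma>O (wm_lang \<Sigma>I \<Sigma>O qI delta F)) \<and>
        (\<forall>g. delay_fun g \<and> g 0 \<le> 2 ^ n \<longrightarrow> I_wins g \<Sigma>I \<Sigma>O (wm_lang \<Sigma>I \<Sigma>O qI delta F)))"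
  by (intro exI[of _ 24] allI impI, intro exI) (rule counter_game)

end
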